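(* Let $M_t, L, K$ be positive integers, let $1\le L'\le L$, let $\mathbf h_1,\dots,\mathbf h_L\in\mathbb C^{M_t}$, let $n_1,\dots,n_L$ be pairwise distinct nonnegative integers, let $\sigma>0$, and let $n'_{\rm span}$ be an integer with $0\le n'_{\rm span}<n_{\rm span}$. With $\kappa_{l'}$, $\bar{\mathbf H}_{l'}^{\perp}$, $\mathbf g_k$ and $\mathbf V_k$ defined as in the context, for every $k\in\{0,1,\dots,K-1\}$ we have $\mathbf g_k=\mathbf V_k\mathbf e_k$, where $$\mathbf e_k=\frac{1}{\sigma}\sum_{l=1}^{L}\mathbf h_l\, e^{j\frac{2\pi}{K}k\,(n_l-n_{\max}+n'_{\rm span})}\in\mathbb C^{M_t}.$$
   Context: Here $j$ is the imaginary unit and $(\cdot)^H$ denotes conjugate transpose. Set $n_{\max}=\max_{1\le l\le L}n_l$ and $n_{\rm span}=n_{\max}-\min_{1\le l\le L}n_l$. For $l'=1,\dots,L'$ define the delay pre-compensation $\kappa_{l'}=n_{\max}-n_{L-L'+l'}$. For each $l'$ define the index sets $\mathcal L_{l'}=\{1\le l\le L:\ n_l+\kappa_{l'}\notin[n_{\max}-n'_{\rm span},\,n_{\max}]\}$ and $\bar{\mathcal L}_{l'}=\{1,\dots,L\}\setminus\mathcal L_{l'}$. Let $\bar{\mathbf H}_{l'}\in\mathbb C^{M_t\times|\mathcal L_{l'}|}$ be the matrix whose columns are the $\mathbf h_l$ with $l\in\mathcal L_{l'}$, and let $\bar{\mathbf H}_{l'}^{\perp}\in\mathbb C^{M_t\times\bar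 r_{l'}}$ be a matrix whose columns form an orthonormal basis of the orthogonal complement (in $\mathbb C^{M_t}$) of the column space of $\bar{\mathbf H}_{l'}$ (if $\mathcal L_{l'}=\emptyset$ this complement is all of $\mathbb C^{M_t}$). For $t\in\{0,1,\dots,n'_{\rm span}\}$ define $\mathbf g_{l'}[t]=\mathbf h_l$ if there exists $l\in\bar{\mathcal L}_{l'}$ with $n_l+\kappa_{l'}=t+n_{\max}-n'_{\rm span}$ (such $l$ is unique since the delays are distinct), and $\mathbf g_{l'}[t]=\mathbf 0$ otherwise. For $k\in\{0,\dots,K-1\}$ define $\mathbf g_{kl'}=\frac1\sigma\sum_{t=0}^{n'_{\rm span}}\mathbf g_{l'}[t]e^{j\frac{2\pi}{K}kt}\in\mathbb C^{M_t}$, let $R=\sum_{l'=1}^{L'}\bar r_{l'}$, define the stacked vector $\mathbf g_k=\big[\mathbf g_{k1}^H\bar{\mathbf H}_1^{\perp},\dots,\mathbf g_{kL'}^H\bar{\mathbf H}_{L'}^{\perp}\big]^H\in\mathbb C^{R}$, and define $\mathbf V_k=\big[\bar{\mathbf H}_1^{\perp}e^{-j\frac{2\pi}{K}k\kappa_1},\dots,\bar{\mathbf H}_{L'}^{\perp}e^{-j\frac{2\pi}{K}k\kappa_{L'}}\big]^H\in\mathbb C^{R\times M_t}$. *)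

theory Defs
  imports "Jordan_Normal_Form.Schur_Decomposition"
begin

(* Vectors in C^m are Jordan_Normal_Form vectors in carrier_vec m; matrices are complex mat.
   (.)^H is mat_adjoint (conjugate transpose). *)

definition colspace :: "complex mat \<Rightarrow> complex vec set" where
  "colspace A = {A *\<^sub>v c | c. c \<in> carrier_vec (dim_col A)}"

definition orth_compl :: "nat \<Rightarrow> complex vec set \<Rightarrow> complex vec set" where
  "orth_compl m S = {v \<in> carrier_vec m. \<forall>w\<in>S. v \<bullet>c w = 0}"

definition onb_matrix :: "nat \<Rightarrow> complex mat \<Rightarrow> complex vec set \<Rightarrow> bool" where
  "onb_matrix m P S \<longleftrightarrow> P \<in> carrier_mat m (dim_col P) \<and>
     mat_adjoint P * P = 1\<^sub>m (dim_col P) \<and> colspace P = S"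

definition hcat :: "nat \<Rightarrow> complex mat list \<Rightarrow> complex mat" where
  "hcat m As = mat_of_cols m (concat (map cols As))"

definition n_max :: "nat \<Rightarrow> (nat \<Rightarrow> nat) \<Rightarrow> int" where
  "n_max L n = int (Max (n ` {1..L}))"

definition n_span :: "nat \<Rightarrow> (nat \<Rightarrow> nat) \<Rightarrow> int" where
  "n_span L n = n_max L n - int (Min (n ` {1..L}))"

definition kappa :: "nat \<Rightarrow> nat \<Rightarrow> (nat \<Rightarrow> nat) \<Rightarrow> nat \<Rightarrow> int" where
  "kappa L L' n l' = n_max L n - int (n (L - L' + l'))"

(* \<L>_{l'} ; ns stands for n'_span *)
definition Lset :: "nat \<Rightarrow> nat \<Rightarrow> (nat \<Rightarrow> nat) \<Rightarrow> int \<Rightarrow> nat \<Rightarrow> nat set" where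
  "Lset L L' n ns l' = {l \<in> {1..L}. int (n l) + kappa L L' n l' \<notin> {n_max L n - ns .. n_max L n}}"

definition Lbar :: "nat \<Rightarrow> nat \<Rightarrow> (nat \<Rightarrow> nat) \<Rightarrow> int \<Rightarrow> nat \<Rightarrow> nat set" where
  "Lbar L L' n ns l' = {1..L} - Lset L L' n ns l'"

definition Hbar :: "nat \<Rightarrow> (nat \<Rightarrow> complex vec) \<Rightarrow> nat \<Rightarrow> nat \<Rightarrow> (nat \<Rightarrow> nat) \<Rightarrow> int \<Rightarrow> nat \<Rightarrow> complex mat" where
  "Hbar Mt h L L' n ns l' = mat_of_cols Mt (map h (sorted_list_of_set (Lset L L' n ns l')))"

definition gtap :: "nat \<Rightarrow> (nat \<Rightarrow> complex vec) \<Rightarrow> nat \<Rightarrow> nat \<Rightarrow> (nat \<Rightarrow> nat) \<Rightarrow> int \<Rightarrow> nat \<Rightarrow> int \<Rightarrow> complex vec" where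
  "gtap Mt h L L' n ns l' t =
     (if \<exists>l\<in>Lbar L L' n ns l'. int (n l) + kappa L L' n l' = t + n_max L n - ns
      then h (THE l. l \<in> Lbar L L' n ns l' \<and> int (n l) + kappa L L' n l' = t + n_max L n - ns)
      else 0\<^sub>v Mt)"

definition gkl :: "nat \<Rightarrow> (nat \<Rightarrow> complex vec) \<Rightarrow> nat \<Rightarrow> nat \<Rightarrow> (nat \<Rightarrow> nat) \<Rightarrow> real \<Rightarrow> int \<Rightarrow> nat \<Rightarrow> nat \<Rightarrow> nat \<Rightarrow> complex vec" where
  "gkl Mt h L L' n \<sigma> ns K k l' = vec Mt (\<lambda>i. (1 / complex_of_real \<sigma>) *
     (\<Sum>t\<in>{0..ns}. gtap Mt h L L' n ns l' t $ i * exp (\<i> * of_real (2 * pi / real K) * of_nat k * of_int t)))"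

(* g_k = [g_{k1}^H H1perp, ..., g_{kL'}^H HL'perp]^H, Hp l' is the matrix \<bar>H\<bar>_{l'}^\<perp> *)
definition gk :: "nat \<Rightarrow> (nat \<Rightarrow> complex vec) \<Rightarrow> nat \<Rightarrow> nat \<Rightarrow> (nat \<Rightarrow> nat) \<Rightarrow> real \<Rightarrow> int \<Rightarrow> nat \<Rightarrow> (nat \<Rightarrow> complex mat) \<Rightarrow> nat \<Rightarrow> complex vec" where
  "gk Mt h L L' n \<sigma> ns K Hp k = col (mat_adjoint (hcat 1
     (map (\<lambda>l'. mat_adjoint (mat_of_cols Mt [gkl Mt h L L' n \<sigma> ns K k l']) * Hp l') [1..<L'+1]))) 0"

definition Vk :: "nat \<Rightarrow> nat \<Rightarrow> nat \<Rightarrow> (nat \<Rightarrow> nat) \<Rightarrow> nat \<Rightarrow> (nat \<Rightarrow> complex mat) \<Rightarrow> nat \<Rightarrow> complex mat" where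
  "Vk Mt L L' n K Hp k = mat_adjoint (hcat Mt
     (map (\<lambda>l'. exp (- \<i> * of_real (2 * pi / real K) * of_nat k * of_int (kappa L L' n l')) \<cdot>\<^sub>m Hp l') [1..<L'+1]))"

definition ek :: "nat \<Rightarrow> (nat \<Rightarrow> complex vec) \<Rightarrow> nat \<Rightarrow> (nat \<Rightarrow> nat) \<Rightarrow> real \<Rightarrow> int \<Rightarrow> nat \<Rightarrow> nat \<Rightarrow> complex vec" where
  "ek Mt h L n \<sigma> ns K k = vec Mt (\<lambda>i. (1 / complex_of_real \<sigma>) *
     (\<Sum>l=1..L. h l $ i * exp (\<i> * of_real (2 * pi / real K) * of_nat k * of_int (int (n l) - n_max L n + ns))))"

end

(*
  Multiplying e_k by the phase e^{j 2 pi k kappa_l' / K} gives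
  (1/sigma) sum_l h_l e^{j 2 pi k (n_l + kappa_l' - n_max + n'_span) / K}.  The terms with
  l outside the index set L_l' are exactly g_kl', because the tap g_l'[t] is h_l at
  t = n_l + kappa_l' - n_max + n'_span.  The terms with l in L_l' are combinations of columns
  of Hbar_l' and are therefore annihilated by (Hbar_l'^perp)^H.  Hence, block by block,
  g_kl'^H Hbar_l'^perp = e_k^H (e^{-j 2 pi k kappa_l' / K} Hbar_l'^perp), and stacking the
  blocks gives g_k = V_k e_k.
*)

theory Submission
  imports Defs
begin

lemma mat_adjoint_dims [simp]:
  "dim_row (mat_adjoint A) = dim_col A" "dim_col (mat_adjoint A) = dim_row A"
  unfolding mat_adjoint_def by auto

lemma index_mat_adjoint [simp]:
  "i < dim_col A \<Longrightarrow> j < dim_row A \<Longrightarrow>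
    mat_adjoint A $$ (i, j) = conjugate (A $$ (j, i))"
  unfolding mat_adjoint_def by (simp add: mat_of_rows_def)

lemma mat_adjoint_adjoint [simp]: "mat_adjoint (mat_adjoint A) = A"
  by (rule eq_matI) auto

lemma mat_adjoint_mult:
  fixes A B :: "'a :: conjugatable_field mat"
  assumes "dim_col A = dim_row B"
  shows "mat_adjoint (A * B) = mat_adjoint B * mat_adjoint A"
proof (rule eq_matI)
  fix i j
  assume "i < dim_row (mat_adjoint B * mat_adjoint A)" "j < dim_col (mat_adjoint B * mat_adjoint A)"
  then show "mat_adjoint (A * B) $$ (i, j) = (mat_adjoint B * mat_adjoint A) $$ (i, j)"
    using assms
    by (auto simp: scalar_prod_def sum_conjugate conjugate_dist_mul mult.commute intro!: sum.cong)
qed auto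

lemma mult_mat_of_cols:
  assumes "A \<in> carrier_mat r m" "set cs \<subseteq> carrier_vec m"
  shows "A * mat_of_cols m cs = mat_of_cols r (map ((*\<^sub>v) A) cs)"
  using assms by (intro eq_matI) (auto simp: mat_of_cols_index subset_code(1))

lemma mult_hcat:
  assumes "A \<in> carrier_mat r m" "\<And>B. B \<in> set Bs \<Longrightarrow> dim_row B = m"
  shows "A * hcat m Bs = hcat r (map ((*) A) Bs)"
proof -
  have "cols (A * B) = map ((*\<^sub>v) A) (cols B)" if "B \<in> set Bs" for B
    using assms that by (intro nth_equalityI) auto
  then have "concat (map cols (map ((*) A) Bs)) = map ((*\<^sub>v) A) (concat (map cols Bs))"
    by (simp add: map_concat cong: map_cong)
  moreover have "set (concat (map cols Bs)) \<subseteq> carrier_vec m"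
    using assms(2) by (auto simp: cols_def) (metis col_dim)
  ultimately show ?thesis
    unfolding hcat_def by (simp add: mult_mat_of_cols[OF assms(1)])
qed

lemma adjoint_hcat_mult_vec:
  fixes e :: "complex vec"
  assumes e: "e \<in> carrier_vec m" and Bs: "\<And>B. B \<in> set Bs \<Longrightarrow> dim_row B = m"
  shows "col (mat_adjoint (hcat 1 (map (\<lambda>B. mat_adjoint (mat_of_cols m [e]) * B) Bs))) 0 =
    mat_adjoint (hcat m Bs) *\<^sub>v e"
proof -
  let ?E = "mat_adjoint (mat_of_cols m [e])"
  have H: "mat_adjoint (hcat m Bs) \<in> carrier_mat (dim_col (hcat m Bs)) m"
    by (intro carrier_matI) (simp_all add: hcat_def)
  have "?E \<in> carrier_mat 1 m" by (simp add: carrier_matI)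
  then have "mat_adjoint (hcat 1 (map (\<lambda>B. ?E * B) Bs)) = mat_adjoint (?E * hcat m Bs)"
    using Bs by (simp only: mult_hcat)
  also have "\<dots> = mat_adjoint (hcat m Bs) * mat_of_cols m [e]"
    by (subst mat_adjoint_mult) (simp_all add: hcat_def)
  finally show ?thesis
    using col_mult2[OF H mat_of_cols_carrier(1)[of m "[e]"], of 0] e by simp
qed

lemma row_adjoint_mult_eqI:
  fixes g e :: "'a :: conjugatable_field vec"
  assumes "g \<in> carrier_vec m" "e \<in> carrier_vec m" "dim_row P = m"
    and "\<And>j. j < dim_col P \<Longrightarrow> col P j \<bullet>c g = c * (col P j \<bullet>c e)"
  shows "mat_adjoint (mat_of_cols m [g]) * P = mat_adjoint (mat_of_cols m [e]) * (c \<cdot>\<^sub>m P)"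
proof (rule eq_matI)
  fix i j assume "i < dim_row (mat_adjoint (mat_of_cols m [e]) * (c \<cdot>\<^sub>m P))"
    "j < dim_col (mat_adjoint (mat_of_cols m [e]) * (c \<cdot>\<^sub>m P))"
  then show "(mat_adjoint (mat_of_cols m [g]) * P) $$ (i, j) =
      (mat_adjoint (mat_of_cols m [e]) * (c \<cdot>\<^sub>m P)) $$ (i, j)"
    using assms(1-3) assms(4)[of j]
    by (auto simp: scalar_prod_def sum_distrib_left mat_of_cols_index mult_ac intro!: sum.cong)
qed auto

lemma cols_subset_colspace: "set (cols A) \<subseteq> colspace A"
proof
  fix v assume "v \<in> set (cols A)"
  then obtain j where j: "j < dim_col A" "v = col A j" by (auto simp: cols_def)
  then have "A *\<^sub>v unit_vec (dim_col A) j = v"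
    by (intro eq_vecI) (auto simp: row_def col_def)
  then show "v \<in> colspace A" unfolding colspace_def by force
qed

lemma onb_matrixD:
  assumes "onb_matrix m P S"
  shows "dim_row P = m" "set (cols P) \<subseteq> S"
  using assms cols_subset_colspace[of P] unfolding onb_matrix_def by auto

lemma orth_compl_orth_cols:
  "p \<in> orth_compl m (colspace A) \<Longrightarrow> v \<in> set (cols A) \<Longrightarrow> p \<bullet>c v = 0"
  using cols_subset_colspace unfolding orth_compl_def by blast

lemma cscalar_prod_add_right:
  fixes p :: "'a :: conjugatable_ring vec"
  assumes "p \<in> carrier_vec m" "v \<in> carrier_vec m" "w \<in> carrier_vec m"
  shows "p \<bullet>c (v + w) = p \<bullet>c v + p \<bullet>c w"
  using assms by (simp add: conjugate_add_vec scalar_prod_add_distrib)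

lemma cscalar_prod_smult_right:
  fixes p :: "'a :: {conjugatable_ring, comm_ring} vec"
  assumes "p \<in> carrier_vec m" "v \<in> carrier_vec m"
  shows "p \<bullet>c (a \<cdot>\<^sub>v v) = conjugate a * (p \<bullet>c v)"
  using assms by (simp add: conjugate_smult_vec scalar_prod_smult_right)

lemma cscalar_prod_lincomb_eq_0:
  fixes p :: "complex vec"
  assumes "p \<in> carrier_vec m" "\<And>l. l \<in> S \<Longrightarrow> v l \<in> carrier_vec m"
    and "\<And>l. l \<in> S \<Longrightarrow> p \<bullet>c v l = 0"
  shows "p \<bullet>c vec m (\<lambda>i. \<Sum>l\<in>S. a l * v l $ i) = 0"
proof -
  have "dim_vec (v l) = m" if "l \<in> S" for l
    using assms(2)[OF that] by simp
  then have "p \<bullet>c vec m (\<lambda>i. \<Sum>l\<in>S. a l * v l $ i) =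
      (\<Sum>l\<in>S. cnj (a l) * (p \<bullet>c v l))"
    using assms(1) by (auto simp: scalar_prod_def sum_distrib_left sum_distrib_right
      mult_ac sum.swap[where A = "{0..<m}"] intro!: sum.cong)
  then show ?thesis using assms(3) by simp
qed

definition twiddle :: "nat \<Rightarrow> nat \<Rightarrow> int \<Rightarrow> complex" where
  "twiddle K k t = exp (\<i> * of_real (2 * pi / real K) * of_nat k * of_int t)"

lemma twiddle_add: "twiddle K k (a + b) = twiddle K k a * twiddle K k b"
  unfolding twiddle_def exp_add[symmetric] by (simp add: ring_distribs)

lemma cnj_twiddle:
  "cnj (twiddle K k t) = exp (- \<i> * of_real (2 * pi / real K) * of_nat k * of_int t)"
  using cis_cnj[of "2 * pi / real K * real k * real_of_int t"]
  unfolding twiddle_def by (simp add: cis_conv_exp mult.assoc)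

lemma Lset_Lbar_partition:
  "{1..L} = Lbar L L' n ns l' \<union> Lset L L' n ns l'" "Lbar L L' n ns l' \<inter> Lset L L' n ns l' = {}"
  "finite (Lbar L L' n ns l')" "finite (Lset L L' n ns l')"
  unfolding Lbar_def Lset_def by auto

lemma Lset_subset: "Lset L L' n ns l' \<subseteq> {1..L}"
  unfolding Lset_def by blast

lemma Lbar_subset: "Lbar L L' n ns l' \<subseteq> {1..L}"
  unfolding Lbar_def by blast

lemma gtap_at_delay:
  assumes inj: "inj_on n {1..L}" and l: "l \<in> Lbar L L' n ns l'"
  shows "gtap Mt h L L' n ns l' (int (n l) + kappa L L' n l' - n_max L n + ns) = h l"
proof -
  have "l0 = l" if "l0 \<in> Lbar L L' n ns l'" "n l0 = n l" for l0
    using inj_onD[OF inj that(2)] that(1) l by (simp add: Lbar_def)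
  then have "(THE l0. l0 \<in> Lbar L L' n ns l' \<and> n l0 = n l) = l"
    using l by blast
  then show ?thesis
    using l unfolding gtap_def by auto
qed

lemma gtap_off_delays:
  assumes "t \<notin> (\<lambda>l. int (n l) + kappa L L' n l' - n_max L n + ns) ` Lbar L L' n ns l'"
  shows "gtap Mt h L L' n ns l' t = 0\<^sub>v Mt"
proof -
  have "\<not> (\<exists>l\<in>Lbar L L' n ns l'. int (n l) + kappa L L' n l' = t + n_max L n - ns)"
    using assms by (auto simp: image_iff)
  then show ?thesis unfolding gtap_def by simp
qed

lemma sum_gtap_reindex:
  assumes inj: "inj_on n {1..L}" and i: "i < Mt"
  shows "(\<Sum>t\<in>{0..ns}. gtap Mt h L L' n ns l' t $ i * f t) =
    (\<Sum>l\<in>Lbar L L' n ns l'. h l $ i * f (int (n l) + kappa L L' n l' - n_max L n + ns))"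
proof -
  define \<phi> where "\<phi> l = int (n l) + kappa L L' n l' - n_max L n + ns" for l
  have \<phi>_inj: "inj_on \<phi> (Lbar L L' n ns l')"
    using inj_on_subset[OF inj Lbar_subset] by (simp add: inj_on_def \<phi>_def)
  have \<phi>_range: "\<phi> ` Lbar L L' n ns l' \<subseteq> {0..ns}"
    unfolding \<phi>_def Lbar_def Lset_def by auto
  have "(\<Sum>t\<in>{0..ns}. gtap Mt h L L' n ns l' t $ i * f t) =
      (\<Sum>t\<in>\<phi> ` Lbar L L' n ns l'. gtap Mt h L L' n ns l' t $ i * f t)"
    using \<phi>_range gtap_off_delays[of _ n L L' l' ns Mt h] i
    by (intro sum.mono_neutral_right) (auto simp: \<phi>_def)
  also have "\<dots> = (\<Sum>l\<in>Lbar L L' n ns l'. gtap Mt h L L' n ns l' (\<phi> l) $ i * f (\<phi> l))"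
    using sum.reindex[OF \<phi>_inj] by simp
  also have "\<dots> = (\<Sum>l\<in>Lbar L L' n ns l'. h l $ i * f (\<phi> l))"
    using gtap_at_delay[OF inj] by (simp add: \<phi>_def)
  finally show ?thesis unfolding \<phi>_def .
qed

lemma h_in_cols_Hbar:
  assumes "\<And>l. l \<in> {1..L} \<Longrightarrow> h l \<in> carrier_vec Mt" "l \<in> Lset L L' n ns l'"
  shows "h l \<in> set (cols (Hbar Mt h L L' n ns l'))"
proof -
  have "set (map h (sorted_list_of_set (Lset L L' n ns l'))) \<subseteq> carrier_vec Mt"
    using assms(1) Lset_subset[of L L' n ns l'] Lset_Lbar_partition(4)[of L L' n ns l'] by auto
  then show ?thesis
    using assms(2) Lset_Lbar_partition(4)[of L L' n ns l'] unfolding Hbar_def by simp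
qed

lemma gkl_eq_sum_Lbar:
  assumes "inj_on n {1..L}"
  shows "gkl Mt h L L' n \<sigma> ns K k l' = vec Mt (\<lambda>i. \<Sum>l\<in>Lbar L L' n ns l'.
    (1 / complex_of_real \<sigma> * twiddle K k (int (n l) + kappa L L' n l' - n_max L n + ns)) * h l $ i)"
proof -
  have "gkl Mt h L L' n \<sigma> ns K k l' $ i = (\<Sum>l\<in>Lbar L L' n ns l'.
      (1 / complex_of_real \<sigma> * twiddle K k (int (n l) + kappa L L' n l' - n_max L n + ns)) * h l $ i)"
    if i: "i < Mt" for i
    unfolding gkl_def twiddle_def[symmetric] index_vec[OF i] sum_gtap_reindex[OF assms i]
    by (simp add: sum_distrib_left mult_ac)
  then show ?thesis by (intro eq_vecI) (simp_all add: gkl_def)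
qed

lemma twiddle_smult_ek:
  "twiddle K k (kappa L L' n l') \<cdot>\<^sub>v ek Mt h L n \<sigma> ns K k = vec Mt (\<lambda>i. \<Sum>l\<in>{1..L}.
    (1 / complex_of_real \<sigma> * twiddle K k (int (n l) + kappa L L' n l' - n_max L n + ns)) * h l $ i)"
  unfolding ek_def twiddle_def[symmetric]
  by (rule eq_vecI) (simp_all add: twiddle_add[symmetric] sum_distrib_left mult_ac algebra_simps)

lemma cscalar_prod_gkl:
  assumes h: "\<And>l. l \<in> {1..L} \<Longrightarrow> h l \<in> carrier_vec Mt" and inj: "inj_on n {1..L}"
    and p: "p \<in> orth_compl Mt (colspace (Hbar Mt h L L' n ns l'))"
  shows "p \<bullet>c gkl Mt h L L' n \<sigma> ns K k l' =
    cnj (twiddle K k (kappa L L' n l')) * (p \<bullet>c ek Mt h L n \<sigma> ns K k)"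
proof -
  define c where
    "c l = 1 / complex_of_real \<sigma> * twiddle K k (int (n l) + kappa L L' n l' - n_max L n + ns)" for l
  define w where "w = vec Mt (\<lambda>i. \<Sum>l\<in>Lset L L' n ns l'. c l * h l $ i)"
  have p_dim: "p \<in> carrier_vec Mt" using p unfolding orth_compl_def by blast
  have h_Lset: "h l \<in> carrier_vec Mt" if "l \<in> Lset L L' n ns l'" for l
    using h Lset_subset[of L L' n ns l'] that by blast
  have split:
    "twiddle K k (kappa L L' n l') \<cdot>\<^sub>v ek Mt h L n \<sigma> ns K k = gkl Mt h L L' n \<sigma> ns K k l' + w"
    unfolding twiddle_smult_ek gkl_eq_sum_Lbar[OF inj] w_def c_def[symmetric]
      Lset_Lbar_partition(1)[of L L' n ns l']
    by (rule eq_vecI) (simp_all add: Lset_Lbar_partition sum.union_disjoint)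
  have w_orth: "p \<bullet>c w = 0"
    unfolding w_def
    by (rule cscalar_prod_lincomb_eq_0[OF p_dim h_Lset orth_compl_orth_cols[OF p h_in_cols_Hbar[OF h]]])
  have dims: "gkl Mt h L L' n \<sigma> ns K k l' \<in> carrier_vec Mt" "w \<in> carrier_vec Mt"
    "ek Mt h L n \<sigma> ns K k \<in> carrier_vec Mt"
    unfolding gkl_def w_def ek_def by simp_all
  have "cnj (twiddle K k (kappa L L' n l')) * (p \<bullet>c ek Mt h L n \<sigma> ns K k) =
      p \<bullet>c (twiddle K k (kappa L L' n l') \<cdot>\<^sub>v ek Mt h L n \<sigma> ns K k)"
    using cscalar_prod_smult_right[OF p_dim dims(3)] by simp
  also have "\<dots> = p \<bullet>c gkl Mt h L L' n \<sigma> ns K k l'"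
    unfolding split cscalar_prod_add_right[OF p_dim dims(1,2)] w_orth by simp
  finally show ?thesis ..
qed

lemma adjoint_gkl_mult:
  assumes "\<And>l. l \<in> {1..L} \<Longrightarrow> h l \<in> carrier_vec Mt" "inj_on n {1..L}"
    and "dim_row P = Mt" "set (cols P) \<subseteq> orth_compl Mt (colspace (Hbar Mt h L L' n ns l'))"
  shows "mat_adjoint (mat_of_cols Mt [gkl Mt h L L' n \<sigma> ns K k l']) * P =
    mat_adjoint (mat_of_cols Mt [ek Mt h L n \<sigma> ns K k]) *
    (exp (- \<i> * of_real (2 * pi / real K) * of_nat k * of_int (kappa L L' n l')) \<cdot>\<^sub>m P)"
proof (rule row_adjoint_mult_eqI)
  fix j assume "j < dim_col P"
  then have pj: "col P j \<in> orth_compl Mt (colspace (Hbar Mt h L L' n ns l'))"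
    using assms(4) by (metis cols_length cols_nth nth_mem subsetD)
  show "col P j \<bullet>c gkl Mt h L L' n \<sigma> ns K k l' =
      exp (- \<i> * of_real (2 * pi / real K) * of_nat k * of_int (kappa L L' n l')) *
      (col P j \<bullet>c ek Mt h L n \<sigma> ns K k)"
    using cscalar_prod_gkl[OF assms(1,2) pj] unfolding cnj_twiddle .
qed (use assms(3) in \<open>simp_all add: gkl_def ek_def\<close>)

theorem theorem2:
  fixes Mt L L' K :: nat and h :: "nat \<Rightarrow> complex vec" and n :: "nat \<Rightarrow> nat"
    and \<sigma> :: real and ns :: int and Hp :: "nat \<Rightarrow> complex mat"
  assumes "Mt > 0" "L > 0" "K > 0" "1 \<le> L'" "L' \<le> L"
    and "\<And>l. l \<in> {1..L} \<Longrightarrow> h l \<in> carrier_vec Mt"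
    and "inj_on n {1..L}"
    and "\<sigma> > 0"
    and "0 \<le> ns" "ns < n_span L n"
    and "\<And>l'. l' \<in> {1..L'} \<Longrightarrow>
           onb_matrix Mt (Hp l') (orth_compl Mt (colspace (Hbar Mt h L L' n ns l')))"
    and "k < K"
  shows "gk Mt h L L' n \<sigma> ns K Hp k = Vk Mt L L' n K Hp k *\<^sub>v ek Mt h L n \<sigma> ns K k"
proof -
  define c where
    "c l' = exp (- \<i> * of_real (2 * pi / real K) * of_nat k * of_int (kappa L L' n l'))" for l'
  have Hp_blocks: "dim_row (Hp l') = Mt"
      "set (cols (Hp l')) \<subseteq> orth_compl Mt (colspace (Hbar Mt h L L' n ns l'))"
    if "l' \<in> set [1..<L'+1]" for l'
    using onb_matrixD[OF assms(11)[of l']] that by auto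
  have "map (\<lambda>l'. mat_adjoint (mat_of_cols Mt [gkl Mt h L L' n \<sigma> ns K k l']) * Hp l') [1..<L'+1] =
      map (\<lambda>B. mat_adjoint (mat_of_cols Mt [ek Mt h L n \<sigma> ns K k]) * B)
        (map (\<lambda>l'. c l' \<cdot>\<^sub>m Hp l') [1..<L'+1])"
    unfolding c_def map_map o_def
    by (rule map_cong[OF refl], rule adjoint_gkl_mult[OF assms(6,7) Hp_blocks])
  moreover have "ek Mt h L n \<sigma> ns K k \<in> carrier_vec Mt" unfolding ek_def by simp
  moreover have "dim_row B = Mt" if "B \<in> set (map (\<lambda>l'. c l' \<cdot>\<^sub>m Hp l') [1..<L'+1])" for B
    using that Hp_blocks(1) by auto
  ultimately show ?thesis
    unfolding gk_def Vk_def c_def[symmetric] by (simp only: adjoint_hcat_mult_vec)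
qed

end
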